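(* Let $G=(V,E)$ be a finite, simple, undirected, connected graph, let $S\subseteq V$ be nonempty and let $\ell\geq 1$ be an integer. (i) If $S$ is an $\ell$-solid-resolving set of $G$, then $S$ is an $\{\ell\}$-resolving set of $G$. (ii) If $S$ is an $\{\ell+1\}$-resolving set of $G$, then $S$ is an $\ell$-solid-resolving set of $G$.
   Context: $d(u,v)$ is the shortest-path distance in $G$; for nonempty $X\subseteq V$, $d(s,X)=\min_{x\in X}d(s,x)$; for $S=\{s_1,\dots,s_k\}$, $\mathcal{D}_S(X)=(d(s_1,X),\dots,d(s_k,X))$. $S$ is an $\{\ell\}$-resolving set if $\mathcal{D}_S(X)\neq\mathcal{D}_S(Y)$ for all distinct nonempty $X,Y\subseteq V$ with $|X|\leq \ell$, $|Y|\leq\ell$. $S$ is an $\ell$-solid-resolving set if $\mathcal{D}_S(X)\neq\mathcal{D}_S(Y)$ for all distinct nonempty $X,Y\subseteq V$ with $|X|\leq\ell$ ($Y$ arbitrary size). *)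

theory Defs
  imports Main
begin

definition simple_graph :: "'a set \<Rightarrow> ('a \<Rightarrow> 'a \<Rightarrow> bool) \<Rightarrow> bool" where
  "simple_graph V E \<longleftrightarrow> finite V \<and> (\<forall>u v. E u v \<longrightarrow> u \<in> V \<and> v \<in> V)
     \<and> (\<forall>u v. E u v \<longrightarrow> E v u) \<and> (\<forall>v. \<not> E v v)"

definition is_walk :: "('a \<Rightarrow> 'a \<Rightarrow> bool) \<Rightarrow> 'a \<Rightarrow> 'a \<Rightarrow> 'a list \<Rightarrow> bool" where
  "is_walk E u v xs \<longleftrightarrow> xs \<noteq> [] \<and> hd xs = u \<and> last xs = v
     \<and> (\<forall>i. Suc i < length xs \<longrightarrow> E (xs ! i) (xs ! Suc i))"

definition connected_graph :: "'a set \<Rightarrow> ('a \<Rightarrow> 'a \<Rightarrow> bool) \<Rightarrow> bool" where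
  "connected_graph V E \<longleftrightarrow> (\<forall>u\<in>V. \<forall>v\<in>V. \<exists>xs. is_walk E u v xs)"

definition gdist :: "('a \<Rightarrow> 'a \<Rightarrow> bool) \<Rightarrow> 'a \<Rightarrow> 'a \<Rightarrow> nat" where
  "gdist E u v = (LEAST n. \<exists>xs. is_walk E u v xs \<and> length xs = Suc n)"

definition gdist_set :: "('a \<Rightarrow> 'a \<Rightarrow> bool) \<Rightarrow> 'a \<Rightarrow> 'a set \<Rightarrow> nat" where
  "gdist_set E s X = Min ((\<lambda>x. gdist E s x) ` X)"

text \<open>The distance vector D_S(X), represented as the function s \<mapsto> d(s,X) on S
  (two vectors are equal iff they agree at every s in S).\<close>
definition dvec :: "('a \<Rightarrow> 'a \<Rightarrow> bool) \<Rightarrow> 'a set \<Rightarrow> 'a set \<Rightarrow> 'a \<Rightarrow> nat" where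
  "dvec E S X = (\<lambda>s. if s \<in> S then gdist_set E s X else 0)"

definition multi_resolving :: "'a set \<Rightarrow> ('a \<Rightarrow> 'a \<Rightarrow> bool) \<Rightarrow> nat \<Rightarrow> 'a set \<Rightarrow> bool" where
  "multi_resolving V E l S \<longleftrightarrow>
     (\<forall>X Y. X \<subseteq> V \<and> Y \<subseteq> V \<and> X \<noteq> {} \<and> Y \<noteq> {} \<and> card X \<le> l \<and> card Y \<le> l \<and> X \<noteq> Y
        \<longrightarrow> dvec E S X \<noteq> dvec E S Y)"

definition solid_resolving :: "'a set \<Rightarrow> ('a \<Rightarrow> 'a \<Rightarrow> bool) \<Rightarrow> nat \<Rightarrow> 'a set \<Rightarrow> bool" where
  "solid_resolving V E l S \<longleftrightarrow>
     (\<forall>X Y. X \<subseteq> V \<and> Y \<subseteq> V \<and> X \<noteq> {} \<and> Y \<noteq> {} \<and> card X \<le> l \<and> X \<noteq> Y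
        \<longrightarrow> dvec E S X \<noteq> dvec E S Y)"

end

theory Submission
  imports Defs
begin

text \<open>Part (i) is immediate: sets of size at most l are in particular covered by the
  solid condition. For (ii), let D_S(X) = D_S(Y) with |X| \<le> l and X \<noteq> Y. If Y \<subseteq> X, both
  sets have size at most l. Otherwise pick y \<in> Y - X: for every s, d(s,y) \<ge> d(s,Y) = d(s,X),
  so adding y to X leaves the distance vector unchanged, and X, X \<union> {y} are distinct sets of
  size at most l + 1 that S does not separate.\<close>

lemma gdist_set_le:
  assumes "finite Y" and "y \<in> Y"
  shows "gdist_set E s Y \<le> gdist E s y"
  using assms unfolding gdist_set_def by simp

lemma gdist_set_insert:
  assumes "finite X" and "X \<noteq> {}"
  shows "gdist_set E s (insert y X) = min (gdist E s y) (gdist_set E s X)"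
  using assms unfolding gdist_set_def by simp

lemma dvec_insert_eq:
  assumes "finite X" and "X \<noteq> {}" and "finite Y" and "y \<in> Y"
    and eq: "dvec E S X = dvec E S Y"
  shows "dvec E S (insert y X) = dvec E S X"
proof
  fix s
  show "dvec E S (insert y X) s = dvec E S X s"
  proof (cases "s \<in> S")
    case True
    then have "gdist_set E s X = gdist_set E s Y"
      using eq by (metis dvec_def)
    also have "\<dots> \<le> gdist E s y"
      using assms(3,4) by (rule gdist_set_le)
    finally have "gdist_set E s X \<le> gdist E s y" .
    with True show ?thesis
      by (simp add: dvec_def gdist_set_insert[OF assms(1,2)])
  qed (simp add: dvec_def)
qed

lemma solid_resolving_imp_multi_resolving:
  "solid_resolving V E l S \<Longrightarrow> multi_resolving V E l S"
  unfolding solid_resolving_def multi_resolving_def by blast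

lemma multi_resolving_Suc_imp_solid_resolving:
  assumes "finite V" and multi: "multi_resolving V E (Suc l) S"
  shows "solid_resolving V E l S"
  unfolding solid_resolving_def
proof (intro allI impI notI)
  fix X Y
  assume XY: "X \<subseteq> V \<and> Y \<subseteq> V \<and> X \<noteq> {} \<and> Y \<noteq> {} \<and> card X \<le> l \<and> X \<noteq> Y"
    and eq: "dvec E S X = dvec E S Y"
  have "finite X" and "finite Y"
    using XY \<open>finite V\<close> finite_subset by blast+
  show False
  proof (cases "Y \<subseteq> X")
    case True
    then have "card Y \<le> l"
      using card_mono[OF \<open>finite X\<close> True] XY by linarith
    then show False
      using multi XY eq unfolding multi_resolving_def by force
  next
    case False
    then obtain y where y: "y \<in> Y" "y \<notin> X" by blast
    have "dvec E S (insert y X) = dvec E S X"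
      using dvec_insert_eq[OF \<open>finite X\<close> _ \<open>finite Y\<close> \<open>y \<in> Y\<close> eq] XY by blast
    moreover have "card (insert y X) \<le> Suc l"
      using XY \<open>finite X\<close> y by simp
    moreover have "insert y X \<noteq> X" and "insert y X \<subseteq> V"
      using XY y by blast+
    ultimately show False
      using multi XY unfolding multi_resolving_def by force
  qed
qed

theorem mainTheorem3:
  fixes V :: "'a set" and E :: "'a \<Rightarrow> 'a \<Rightarrow> bool" and S :: "'a set" and l :: nat
  assumes "simple_graph V E" and "connected_graph V E"
    and "S \<subseteq> V" and "S \<noteq> {}" and "l \<ge> 1"
  shows "(solid_resolving V E l S \<longrightarrow> multi_resolving V E l S)
       \<and> (multi_resolving V E (l + 1) S \<longrightarrow> solid_resolving V E l S)"
proof -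
  have "finite V"
    using \<open>simple_graph V E\<close> by (simp add: simple_graph_def)
  then show ?thesis
    using solid_resolving_imp_multi_resolving multi_resolving_Suc_imp_solid_resolving
    by (metis Suc_eq_plus1)
qed

end
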